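(* Let $S\subseteq[n]$. Suppose each strategic agent $k\in S$ chooses a random vector $\delta_k\in\mathbb{R}^n$ with finite first and second moments, independently across agents ($\delta_i=0$ for $i\notin S$), and that this profile is a (mixed) Nash equilibrium: for every $k\in S$, almost surely $\delta_k$ maximizes $x\mapsto\mathbb{E}[g_k(W'_x,P'_x)]$ over $x\in\mathbb{R}^n$, where $(W'_x,P'_x)$ is the stable point for positions $M+\Delta_x$ with $\Delta_xe_k=x$, $\Delta_xe_j=\delta_j$ ($j\neq k$), and the expectation is over $\{\delta_j:j\in S\setminus\{k\}\}$. Then each $\delta_k$ is almost surely equal to a deterministic vector; i.e., every Nash equilibrium is a pure-strategy Nash equilibrium.
   Context: Fix agents $[n]=\{1,\dots,n\}$. Let $\Sigma\in\mathbb{R}^{n\times n}$ be symmetric positive definite, $\Gamma=\mathrm{diag}(\gamma_1,\dots,\gamma_n)$ with all $\gamma_i>0$, and let $M\in\mathbb{R}^{n\times n}$ be the matrix of true beliefs with $i$-th column $\mu_i=Me_i$. For a matrix of reported negotiating positions $M'\in\mathbb{R}^{n\times n}$, the stable point for $M'$ is the unique pair $(W,P)$ of real $n\times n$ matrices with $W=W^T$, $P^T=-P$ and $M'-P=2\Sigma W\Gamma$; equivalently $\mathrm{vec}(W)=\tfrac12(\Gamma\otimes\Sigma+\Sigma\otimes\Gamma)^{-1}\mathrm{vec}(M'+M'^T)$ and $P=M'-2\Sigma W\Gamma$. Here $\mathrm{vec}$ stacks columns and $e_i$ is the $i$-th standard basis vector. Agent $i$'s (true) utility at $(W,P)$ is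 $g_i(W,P)=w_i^T(\mu_i-Pe_i)-\gamma_i\, w_i^T\Sigma w_i$, where $w_i=We_i$. *)

theory Defs
  imports "HOL-Probability.Probability"
begin

text \<open>Agents are indexed by a finite type 'n (so n = CARD('n)); matrices are real^'n^'n,
  columns are taken with column.\<close>

definition diag_mat :: "real^'n \<Rightarrow> real^'n^'n" where
  "diag_mat g = (\<chi> i j. if i = j then g$i else 0)"

definition is_stable_point :: "real^'n^'n \<Rightarrow> real^'n^'n \<Rightarrow> real^'n^'n \<Rightarrow> real^'n^'n \<Rightarrow> real^'n^'n \<Rightarrow> bool" where
  "is_stable_point Sig Gam M' W P \<longleftrightarrow>
     transpose W = W \<and> transpose P = - P \<and> M' - P = 2 *\<^sub>R (Sig ** W ** Gam)"

definition stable_point :: "real^'n^'n \<Rightarrow> real^'n^'n \<Rightarrow> real^'n^'n \<Rightarrow> (real^'n^'n) \<times> (real^'n^'n)" where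
  "stable_point Sig Gam M' = (THE (W, P). is_stable_point Sig Gam M' W P)"

text \<open>True utility g_i(W,P) of agent i, with mu_i = column i of M.\<close>
definition utility :: "real^'n^'n \<Rightarrow> real^'n \<Rightarrow> real^'n^'n \<Rightarrow> 'n \<Rightarrow> (real^'n^'n) \<times> (real^'n^'n) \<Rightarrow> real" where
  "utility Sig g M i WP =
     (let W = fst WP; P = snd WP; w = column i W
      in w \<bullet> (column i M - column i P) - g$i * (w \<bullet> (Sig *v w)))"

definition deviate :: "('n \<Rightarrow> 'w \<Rightarrow> real^'n) \<Rightarrow> 'n \<Rightarrow> real^'n \<Rightarrow> 'w \<Rightarrow> real^'n^'n" where
  "deviate delta k x \<omega> = (\<chi> r c. if c = k then x$r else delta c \<omega> $ r)"

definition expected_utility ::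
  "'w measure \<Rightarrow> real^'n^'n \<Rightarrow> real^'n \<Rightarrow> real^'n^'n \<Rightarrow> ('n \<Rightarrow> 'w \<Rightarrow> real^'n) \<Rightarrow> 'n \<Rightarrow> real^'n \<Rightarrow> real" where
  "expected_utility Pr Sig g M delta k x =
     (\<integral>\<omega>. utility Sig g M k (stable_point Sig (diag_mat g) (M + deviate delta k x \<omega>)) \<partial>Pr)"

end

theory Submission
  imports Defs
begin

text \<open>The stable point depends linearly on the reported positions, so agent \<open>k\<close>'s own
  weight column is an affine function of its report \<open>x\<close>, and its true utility becomes
  \<open>- w\<^sub>k \<bullet> x + \<gamma>\<^sub>k w\<^sub>k \<bullet> \<Sigma> w\<^sub>k\<close>: a quadratic function of \<open>x\<close> whose quadratic part is
  negative definite, because at a stable point \<open>W \<bullet> A = 2 \<Sum>\<^sub>j \<gamma>\<^sub>j w\<^sub>j \<bullet> \<Sigma> w\<^sub>j\<close>.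
  Averaging over the other agents' reports keeps it strictly concave, so the expected
  utility has at most one maximiser, and a strategy that maximises it almost surely is almost
  surely that maximiser.\<close>

lemma inner_matrix_columns: "(A::real^'n^'m) \<bullet> B = (\<Sum>j\<in>UNIV. column j A \<bullet> column j B)"
  by (simp add: inner_vec_def column_def) (rule sum.swap)

lemma inner_transpose: "transpose A \<bullet> transpose B = (A::real^'n^'m) \<bullet> B"
  by (simp add: inner_matrix_columns inner_vec_def column_def transpose_def) (rule sum.swap)

lemma inner_symmetric_skew_eq_0:
  fixes W P :: "real^'n^'n"
  assumes "transpose W = W" and "transpose P = - P"
  shows "W \<bullet> P = 0"
proof -
  have "W \<bullet> P = - (W \<bullet> P)"
    using inner_transpose[of W P] by (simp add: assms)
  then show ?thesis by simp
qed

lemma column_matrix_mult: "column j (A ** B) = A *v column j B"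
  by (simp add: vec_eq_iff column_def matrix_matrix_mult_def matrix_vector_mult_def)

lemma column_mult_diag_mat: "column j ((A::real^'n^'m) ** diag_mat g) = g$j *\<^sub>R column j A"
  by (simp add: vec_eq_iff column_def matrix_matrix_mult_def diag_mat_def if_distrib mult.commute
      cong: if_cong)

lemma column_add: "column j (A + B) = column j A + column j B"
  by (simp add: vec_eq_iff column_def)

lemma column_diff: "column j (A - B) = column j A - column j B"
  by (simp add: vec_eq_iff column_def)

lemma column_scaleR: "column j (c *\<^sub>R A) = c *\<^sub>R column j A"
  by (simp add: vec_eq_iff column_def)

lemma norm_matrix_sq: "(norm (A::real^'n^'m))\<^sup>2 = (\<Sum>j\<in>UNIV. (norm (column j A))\<^sup>2)"
  by (simp add: power2_norm_eq_inner inner_matrix_columns)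

definition single_column :: "'n \<Rightarrow> real^'m \<Rightarrow> real^'n^'m" where
  "single_column k x = (\<chi> r c. if c = k then x$r else 0)"

lemma column_single_column: "column j (single_column k x) = (if j = k then x else 0)"
  by (simp add: vec_eq_iff column_def single_column_def)

lemma inner_single_column: "A \<bullet> single_column k x = column k A \<bullet> x"
  by (simp add: inner_matrix_columns column_single_column if_distrib cong: if_cong)

lemma deviate_add: "deviate delta k (z + h) \<omega> = deviate delta k z \<omega> + single_column k h"
  by (simp add: vec_eq_iff deviate_def single_column_def)

lemma column_deviate: "column j (deviate delta k x \<omega>) = (if j = k then x else delta j \<omega>)"
  by (simp add: vec_eq_iff deviate_def column_def)

lemma transpose_single_column_skew:
  assumes "transpose (single_column k h) = - single_column k h"
  shows "h = (0::real^'n)"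
proof -
  have entry: "h$i = - (if i = k then h$k else 0)" for i
    using arg_cong[OF assms, of "\<lambda>A. A $ k $ i"] by (simp add: transpose_def single_column_def)
  have "h$i = 0" for i
    using entry[of i] entry[of k] by (cases "i = k") auto
  then show ?thesis
    by (simp add: vec_eq_iff)
qed

lemma norm_add_sq_le: "(norm (a + b))\<^sup>2 \<le> 2 * (norm a)\<^sup>2 + 2 * (norm (b::'a::real_normed_vector))\<^sup>2"
proof -
  have "(norm (a + b))\<^sup>2 \<le> (norm a + norm b)\<^sup>2"
    by (simp add: norm_triangle_ineq power_mono)
  also have "\<dots> \<le> 2 * (norm a)\<^sup>2 + 2 * (norm b)\<^sup>2"
    using sum_squares_bound[of "norm a" "norm b"] by (simp add: power2_eq_square algebra_simps)
  finally show ?thesis .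
qed

lemma borel_measurable_vec:
  fixes f :: "'w \<Rightarrow> 'a::euclidean_space ^ 'n"
  assumes "\<And>i. (\<lambda>\<omega>. f \<omega> $ i) \<in> borel_measurable M"
  shows "f \<in> borel_measurable M"
proof (subst borel_measurable_euclidean_space, intro ballI)
  fix b :: "'a^'n"
  assume "b \<in> Basis"
  then obtain i u where "b = axis i u"
    by (auto simp: Basis_vec_def)
  moreover have "(\<lambda>\<omega>. f \<omega> $ i \<bullet> u) \<in> borel_measurable M"
    using assms[of i] by (intro borel_measurable_inner) auto
  ultimately show "(\<lambda>\<omega>. f \<omega> \<bullet> b) \<in> borel_measurable M"
    by (simp add: inner_axis)
qed

lemma borel_measurable_deviate:
  assumes "\<And>c. delta c \<in> borel_measurable M"
  shows "deviate delta k x \<in> borel_measurable M"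
proof (intro borel_measurable_vec)
  fix r c
  have "(\<lambda>\<omega>. delta c \<omega> $ r) \<in> borel_measurable M"
    by (rule measurable_compose[OF assms borel_measurable_nth])
  then show "(\<lambda>\<omega>. deviate delta k x \<omega> $ r $ c) \<in> borel_measurable M"
    by (cases "c = k") (simp_all add: deviate_def)
qed

lemma integrable_norm_deviate_sq:
  assumes "finite_measure M" and "\<And>c. integrable M (\<lambda>\<omega>. (norm (delta c \<omega>))\<^sup>2)"
  shows "integrable M (\<lambda>\<omega>. (norm (deviate delta k x \<omega>))\<^sup>2)"
proof -
  have "integrable M (\<lambda>\<omega>. (norm (if c = k then x else delta c \<omega>))\<^sup>2)" for c
    using assms by (cases "c = k") (simp_all add: finite_measure.integrable_const)
  then have "integrable M (\<lambda>\<omega>. \<Sum>c\<in>UNIV. (norm (if c = k then x else delta c \<omega>))\<^sup>2)"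
    by (rule Bochner_Integration.integrable_sum)
  then show ?thesis
    by (simp add: norm_matrix_sq column_deviate)
qed

locale negotiation =
  fixes Sig :: "real^'n^'n" and g :: "real^'n"
  assumes pos_def: "\<forall>x. x \<noteq> 0 \<longrightarrow> 0 < x \<bullet> (Sig *v x)"
    and risk_pos: "\<forall>i. 0 < g$i"
begin

abbreviation Gam :: "real^'n^'n" where "Gam \<equiv> diag_mat g"

abbreviation weights :: "real^'n^'n \<Rightarrow> real^'n^'n" where
  "weights A \<equiv> fst (stable_point Sig Gam A)"

lemma quadratic_form_nonneg: "0 \<le> v \<bullet> (Sig *v v)"
  using pos_def by (cases "v = 0") (auto intro: less_imp_le)

definition total_risk :: "real^'n^'n \<Rightarrow> real" where
  "total_risk W = (\<Sum>j\<in>UNIV. g$j * (column j W \<bullet> (Sig *v column j W)))"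

lemma risk_term_nonneg: "0 \<le> g$j * (column j W \<bullet> (Sig *v column j W))"
  using risk_pos quadratic_form_nonneg by (simp add: less_imp_le)

lemma total_risk_nonneg: "0 \<le> total_risk W"
  unfolding total_risk_def by (rule sum_nonneg) (rule risk_term_nonneg)

lemma risk_term_le: "g$k * (column k W \<bullet> (Sig *v column k W)) \<le> total_risk W"
  unfolding total_risk_def by (rule member_le_sum) (auto intro: risk_term_nonneg)

lemma total_risk_eq_0_iff: "total_risk W = 0 \<longleftrightarrow> W = 0"
proof
  assume "total_risk W = 0"
  then have "g$j * (column j W \<bullet> (Sig *v column j W)) = 0" for j
    unfolding total_risk_def by (subst (asm) sum_nonneg_eq_0_iff) (auto intro: risk_term_nonneg)
  then have "column j W = 0" for j
    using pos_def risk_pos by (metis less_numeral_extra(3) mult_pos_pos)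
  then show "W = 0"
    by (simp add: vec_eq_iff column_def)
qed (simp add: total_risk_def column_def flip: zero_vec_def)

lemma inner_mult_diag: "W \<bullet> (Sig ** W ** Gam) = total_risk W"
  by (simp add: inner_matrix_columns column_mult_diag_mat column_matrix_mult[of _ Sig W]
      total_risk_def)

lemma stable_point_inner:
  assumes "is_stable_point Sig Gam A W P"
  shows "W \<bullet> A = 2 * total_risk W"
proof -
  from assms have "A = P + 2 *\<^sub>R (Sig ** W ** Gam)" and "W \<bullet> P = 0"
    by (auto simp: is_stable_point_def algebra_simps inner_symmetric_skew_eq_0)
  then show ?thesis by (simp add: inner_add_right inner_mult_diag)
qed

lemma stable_point_zero:
  assumes "is_stable_point Sig Gam 0 W P"
  shows "W = 0" and "P = 0"
proof -
  show "W = 0"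
    using stable_point_inner[OF assms] total_risk_eq_0_iff by simp
  with assms show "P = 0" by (simp add: is_stable_point_def)
qed

lemma is_stable_point_lincomb:
  assumes "is_stable_point Sig Gam A1 W1 P1" and "is_stable_point Sig Gam A2 W2 P2"
  shows "is_stable_point Sig Gam (a *\<^sub>R A1 + b *\<^sub>R A2) (a *\<^sub>R W1 + b *\<^sub>R W2) (a *\<^sub>R P1 + b *\<^sub>R P2)"
proof -
  have "transpose (a *\<^sub>R X + b *\<^sub>R Y) = a *\<^sub>R transpose X + b *\<^sub>R transpose Y" for X Y :: "real^'n^'n"
    by (simp add: vec_eq_iff transpose_def)
  moreover have "Sig ** (a *\<^sub>R W1 + b *\<^sub>R W2) ** Gam
      = a *\<^sub>R (Sig ** W1 ** Gam) + b *\<^sub>R (Sig ** W2 ** Gam)"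
    by (simp add: vec_eq_iff matrix_matrix_mult_def sum.distrib sum_distrib_left algebra_simps)
  ultimately show ?thesis
    using assms by (simp add: is_stable_point_def algebra_simps)
qed

lemma stable_point_unique:
  assumes "is_stable_point Sig Gam A W1 P1" and "is_stable_point Sig Gam A W2 P2"
  shows "W1 = W2" and "P1 = P2"
proof -
  have "is_stable_point Sig Gam 0 (W1 - W2) (P1 - P2)"
    using is_stable_point_lincomb[OF assms, of 1 "-1"] by simp
  then have "W1 - W2 = 0" and "P1 - P2 = 0"
    by (rule stable_point_zero)+
  then show "W1 = W2" and "P1 = P2"
    by simp_all
qed

text \<open>Every matrix B is the positions matrix of the stable point formed by its symmetric and
  skew parts; since this map is linear and injective, stable points exist for all positions.\<close>

definition positions :: "real^'n^'n \<Rightarrow> real^'n^'n" where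
  "positions B = 2 *\<^sub>R (Sig ** ((1/2) *\<^sub>R (B + transpose B)) ** Gam) + (1/2) *\<^sub>R (B - transpose B)"

lemma is_stable_point_positions:
  "is_stable_point Sig Gam (positions B) ((1/2) *\<^sub>R (B + transpose B)) ((1/2) *\<^sub>R (B - transpose B))"
  by (auto simp: is_stable_point_def positions_def vec_eq_iff transpose_def field_simps)

lemma linear_positions: "linear positions"
  by (rule linearI)
    (simp_all add: positions_def vec_eq_iff matrix_matrix_mult_def transpose_def
      sum.distrib sum_distrib_left algebra_simps)

lemma surj_positions: "surj positions"
proof (rule linear_injective_imp_surjective[OF linear_positions])
  have "B = 0" if "positions B = 0" for B
  proof -
    have "is_stable_point Sig Gam 0 ((1/2) *\<^sub>R (B + transpose B)) ((1/2) *\<^sub>R (B - transpose B))"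
      using is_stable_point_positions[of B] that by simp
    then have "(1/2) *\<^sub>R (B + transpose B) = 0" and "(1/2) *\<^sub>R (B - transpose B) = 0"
      by (rule stable_point_zero)+
    moreover have "B = (1/2) *\<^sub>R (B + transpose B) + (1/2) *\<^sub>R (B - transpose B)"
      by (simp add: vec_eq_iff field_simps)
    ultimately show "B = 0"
      by (metis add.right_neutral)
  qed
  then show "inj positions"
    using linear_injective_0[OF linear_positions] by blast
qed simp

lemma is_stable_point_stable_point:
  "is_stable_point Sig Gam A (fst (stable_point Sig Gam A)) (snd (stable_point Sig Gam A))"
proof -
  obtain B where "A = positions B"
    using surj_positions by (metis surjD)
  then obtain W P where "is_stable_point Sig Gam A W P"
    using is_stable_point_positions by blast
  then have "\<exists>!(W, P). is_stable_point Sig Gam A W P"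
    using stable_point_unique by (intro ex1I[of _ "(W, P)"]) auto
  from theI'[OF this] show ?thesis
    by (simp add: stable_point_def case_prod_unfold)
qed

lemma stable_point_eqI: "is_stable_point Sig Gam A W P \<Longrightarrow> stable_point Sig Gam A = (W, P)"
  using stable_point_unique[OF is_stable_point_stable_point] by (metis prod.collapse)

lemma linear_weights: "linear weights"
proof -
  have "stable_point Sig Gam (a *\<^sub>R A + b *\<^sub>R B) =
      (a *\<^sub>R weights A + b *\<^sub>R weights B,
       a *\<^sub>R snd (stable_point Sig Gam A) + b *\<^sub>R snd (stable_point Sig Gam B))" for a b A B
    by (intro stable_point_eqI is_stable_point_lincomb is_stable_point_stable_point)
  from this[of 1 _ 1] this[of _ _ 0] show ?thesis
    by (intro linearI) simp_all
qed

definition own_utility :: "'n \<Rightarrow> real^'n \<Rightarrow> real^'n \<Rightarrow> real" where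
  "own_utility k w x = - (w \<bullet> x) + g$k * (w \<bullet> (Sig *v w))"

text \<open>At a stable point the own price column is \<open>P e\<^sub>k = A e\<^sub>k - 2 \<gamma>\<^sub>k \<Sigma> w\<^sub>k\<close>, so
  the true belief \<open>\<mu>\<^sub>k\<close> cancels and only the misreport \<open>x\<close> remains.\<close>

lemma utility_stable_point:
  assumes "column k A = column k M + x"
  shows "utility Sig g M k (stable_point Sig Gam A) = own_utility k (column k (weights A)) x"
proof -
  let ?W = "weights A" and ?P = "snd (stable_point Sig Gam A)"
  have "A - ?P = 2 *\<^sub>R (Sig ** ?W ** Gam)"
    using is_stable_point_stable_point by (simp add: is_stable_point_def)
  then have "column k A - column k ?P = 2 *\<^sub>R (g$k *\<^sub>R (Sig *v column k ?W))"
    by (metis column_diff column_scaleR column_mult_diag_mat column_matrix_mult)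
  then have own_price: "column k M - column k ?P = 2 *\<^sub>R (g$k *\<^sub>R (Sig *v column k ?W)) - x"
    using assms by (simp add: algebra_simps)
  have "utility Sig g M k (stable_point Sig Gam A)
      = column k ?W \<bullet> (column k M - column k ?P) - g$k * (column k ?W \<bullet> (Sig *v column k ?W))"
    by (simp add: utility_def Let_def)
  also have "\<dots> = own_utility k (column k ?W) x"
    unfolding own_price by (simp add: own_utility_def inner_diff_right algebra_simps)
  finally show ?thesis .
qed

lemma own_utility_parallelogram:
  "own_utility k (a + b) (z + h) + own_utility k (a - b) (z - h)
     = 2 * own_utility k a z + 2 * own_utility k b h"
  by (simp add: own_utility_def inner_add_left inner_add_right inner_diff_left inner_diff_right
      matrix_vector_right_distrib matrix_vector_mult_diff_distrib algebra_simps)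

lemma own_utility_single_column_neg:
  assumes "h \<noteq> 0"
  shows "own_utility k (column k (weights (single_column k h))) h < 0"
proof -
  let ?W = "weights (single_column k h)"
  let ?P = "snd (stable_point Sig Gam (single_column k h))"
  have stable: "is_stable_point Sig Gam (single_column k h) ?W ?P"
    by (rule is_stable_point_stable_point)
  then have "column k ?W \<bullet> h = 2 * total_risk ?W"
    using stable_point_inner[OF stable] by (simp add: inner_single_column)
  moreover have "?W \<noteq> 0"
  proof
    assume "?W = 0"
    with stable have "transpose (single_column k h) = - single_column k h"
      by (auto simp: is_stable_point_def)
    then show False
      using assms transpose_single_column_skew by blast
  qed
  then have "0 < total_risk ?W"
    using total_risk_eq_0_iff[of ?W] total_risk_nonneg[of ?W] by (auto simp: order_less_le)
  ultimately show ?thesis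
    using risk_term_le[of k ?W] by (simp add: own_utility_def)
qed

lemma abs_own_utility_le:
  obtains C where "0 \<le> C" and "\<And>w. \<bar>own_utility k w x\<bar> \<le> C * (norm w)\<^sup>2 + (norm x)\<^sup>2"
proof -
  obtain K where K: "\<And>v. norm (Sig *v v) \<le> norm v * K" and "0 < K"
    using bounded_linear.pos_bounded[OF matrix_vector_mul_bounded_linear] by blast
  have gk: "0 \<le> g$k"
    using risk_pos less_imp_le by blast
  have "\<bar>own_utility k w x\<bar> \<le> (1/2 + g$k * K) * (norm w)\<^sup>2 + (norm x)\<^sup>2" for w
  proof -
    have "\<bar>w \<bullet> (Sig *v w)\<bar> \<le> K * (norm w)\<^sup>2"
      using Cauchy_Schwarz_ineq2[of w "Sig *v w"] mult_left_mono[OF K[of w] norm_ge_zero[of w]]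
      by (simp add: power2_eq_square mult_ac)
    then have "g$k * \<bar>w \<bullet> (Sig *v w)\<bar> \<le> g$k * (K * (norm w)\<^sup>2)"
      using gk by (rule mult_left_mono)
    then have "\<bar>own_utility k w x\<bar> \<le> norm w * norm x + g$k * (K * (norm w)\<^sup>2)"
      unfolding own_utility_def
      using Cauchy_Schwarz_ineq2[of w x] gk
        abs_triangle_ineq[of "- (w \<bullet> x)" "g$k * (w \<bullet> (Sig *v w))"]
      by (simp add: abs_mult)
    moreover have "norm w * norm x \<le> (norm w)\<^sup>2 / 2 + (norm x)\<^sup>2 / 2"
      using sum_squares_bound[of "norm w" "norm x"] by (simp add: power2_eq_square)
    moreover have "0 \<le> (norm x)\<^sup>2"
      by simp
    ultimately show ?thesis
      unfolding ring_distribs mult.assoc by linarith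
  qed
  moreover have "0 \<le> 1/2 + g$k * K"
    using \<open>0 < K\<close> gk by simp
  ultimately show ?thesis
    using that by blast
qed

lemma bounded_linear_column_weights: "bounded_linear (\<lambda>B. column k (weights B))"
proof -
  have "linear (column k :: real^'n^'n \<Rightarrow> real^'n)"
    by (rule linearI) (simp_all add: column_add column_scaleR)
  from linear_compose[OF linear_weights this] show ?thesis
    by (simp add: linear_conv_bounded_linear o_def)
qed

lemma integrable_own_utility_deviate:
  assumes "finite_measure Pr"
    and "\<And>c. delta c \<in> borel_measurable Pr"
    and "\<And>c. integrable Pr (\<lambda>\<omega>. (norm (delta c \<omega>))\<^sup>2)"
  shows "integrable Pr (\<lambda>\<omega>. own_utility k (column k (weights (M + deviate delta k x \<omega>))) x)"
proof -
  let ?u = "\<lambda>D. own_utility k (column k (weights (M + D))) x"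
  obtain K where K: "\<And>B. norm (column k (weights B)) \<le> norm B * K"
    using bounded_linear.bounded[OF bounded_linear_column_weights] by blast
  obtain C where "0 \<le> C" and C: "\<And>w. \<bar>own_utility k w x\<bar> \<le> C * (norm w)\<^sup>2 + (norm x)\<^sup>2"
    using abs_own_utility_le by blast
  have bound: "\<bar>?u D\<bar> \<le> C * (K\<^sup>2 * (2 * (norm M)\<^sup>2 + 2 * (norm D)\<^sup>2)) + (norm x)\<^sup>2" for D
  proof -
    have "(norm (column k (weights (M + D))))\<^sup>2 \<le> K\<^sup>2 * (norm (M + D))\<^sup>2"
      using power_mono[OF K norm_ge_zero] by (simp add: power_mult_distrib mult.commute)
    also have "\<dots> \<le> K\<^sup>2 * (2 * (norm M)\<^sup>2 + 2 * (norm D)\<^sup>2)"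
      by (rule mult_left_mono[OF norm_add_sq_le]) simp
    finally have "C * (norm (column k (weights (M + D))))\<^sup>2
        \<le> C * (K\<^sup>2 * (2 * (norm M)\<^sup>2 + 2 * (norm D)\<^sup>2))"
      using \<open>0 \<le> C\<close> by (rule mult_left_mono)
    then show ?thesis
      using C[of "column k (weights (M + D))"] by linarith
  qed
  have "continuous_on UNIV (\<lambda>D. column k (weights (M + D)))"
    by (intro continuous_on_compose2[OF linear_continuous_on[OF bounded_linear_column_weights]]
        continuous_intros) auto
  then have "continuous_on UNIV ?u"
    unfolding own_utility_def
    by (intro continuous_intros
        continuous_on_compose2[OF linear_continuous_on[OF matrix_vector_mul_bounded_linear]]) auto
  then have meas: "(\<lambda>\<omega>. ?u (deviate delta k x \<omega>)) \<in> borel_measurable Pr"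
    by (rule measurable_compose[OF borel_measurable_deviate[OF assms(2)] borel_measurable_continuous_onI])
  have int: "integrable Pr (\<lambda>\<omega>. C * (K\<^sup>2 * (2 * (norm M)\<^sup>2 + 2 * (norm (deviate delta k x \<omega>))\<^sup>2))
      + (norm x)\<^sup>2)"
    using integrable_norm_deviate_sq[OF assms(1,3)] assms(1)
    by (intro Bochner_Integration.integrable_add finite_measure.integrable_const integrable_mult_right)
  show ?thesis
  proof (rule Bochner_Integration.integrable_bound[OF int meas], intro AE_I2)
    fix \<omega>
    show "norm (?u (deviate delta k x \<omega>))
        \<le> norm (C * (K\<^sup>2 * (2 * (norm M)\<^sup>2 + 2 * (norm (deviate delta k x \<omega>))\<^sup>2)) + (norm x)\<^sup>2)"
      using order_trans[OF bound[of "deviate delta k x \<omega>"] abs_ge_self] by simp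
  qed
qed

text \<open>Agent \<open>k\<close>'s weight column is affine in its report, so the parallelogram identity
  turns the negativity of the quadratic part into strict concavity, pointwise in \<open>\<omega>\<close>.\<close>

lemma expected_utility_strictly_concave:
  assumes "prob_space Pr"
    and "\<And>c. delta c \<in> borel_measurable Pr"
    and "\<And>c. integrable Pr (\<lambda>\<omega>. (norm (delta c \<omega>))\<^sup>2)"
    and "h \<noteq> 0"
  shows "expected_utility Pr Sig g M delta k (z + h) + expected_utility Pr Sig g M delta k (z - h)
      < 2 * expected_utility Pr Sig g M delta k z"
proof -
  define u where "u x \<omega> = own_utility k (column k (weights (M + deviate delta k x \<omega>))) x" for x \<omega>
  let ?b = "column k (weights (single_column k h))"
  have eu: "expected_utility Pr Sig g M delta k x = (\<integral>\<omega>. u x \<omega> \<partial>Pr)" for x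
    by (simp add: expected_utility_def u_def utility_stable_point column_add column_deviate)
  have shift: "column k (weights (M + deviate delta k (y + h) \<omega>))
      = column k (weights (M + deviate delta k y \<omega>)) + ?b" for y \<omega>
    by (simp add: deviate_add add.assoc linear_add[OF linear_weights] column_add)
  have "u (z + h) \<omega> + u (z - h) \<omega> = 2 * u z \<omega> + 2 * own_utility k ?b h" for \<omega>
    using own_utility_parallelogram[of k "column k (weights (M + deviate delta k z \<omega>))" ?b z h]
      shift[of z \<omega>] shift[of "z - h" \<omega>]
    by (simp add: u_def)
  moreover have int: "integrable Pr (u x)" for x
    unfolding u_def using prob_space.finite_measure[OF assms(1)] assms(2,3)
    by (rule integrable_own_utility_deviate)
  ultimately have "(\<integral>\<omega>. u (z + h) \<omega> \<partial>Pr) + (\<integral>\<omega>. u (z - h) \<omega> \<partial>Pr)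
      = (\<integral>\<omega>. 2 * u z \<omega> + 2 * own_utility k ?b h \<partial>Pr)"
    by (simp flip: Bochner_Integration.integral_add)
  also have "\<dots> = 2 * (\<integral>\<omega>. u z \<omega> \<partial>Pr) + 2 * own_utility k ?b h"
    using int[of z] prob_space.finite_measure[OF assms(1)] prob_space.prob_space[OF assms(1)]
    by (subst Bochner_Integration.integral_add) (simp_all add: finite_measure.integrable_const)
  finally show ?thesis
    using own_utility_single_column_neg[OF assms(4)] by (simp add: eu)
qed

end

lemma maximizer_unique:
  fixes f :: "'a::real_vector \<Rightarrow> real"
  assumes concave: "\<And>z h. h \<noteq> 0 \<Longrightarrow> f (z + h) + f (z - h) < 2 * f z"
    and "\<forall>x. f x \<le> f a" and "\<forall>x. f x \<le> f b"
  shows "a = b"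
proof (rule ccontr)
  assume "a \<noteq> b"
  define h where "h = (1/2) *\<^sub>R (a - b)"
  have "h + h = a - b"
    by (simp add: h_def flip: scaleR_left_distrib)
  then have "(b + h) + h = a" and "h \<noteq> 0"
    using \<open>a \<noteq> b\<close> by (auto simp: add.assoc)
  then have "f a + f b < 2 * f (b + h)"
    using concave[of h "b + h"] by simp
  moreover have "f (b + h) \<le> f a" and "f (b + h) \<le> f b"
    using assms(2,3) by blast+
  ultimately show False
    by linarith
qed

lemma AE_eq_const_of_AE_maximizer:
  fixes f :: "'a::real_vector \<Rightarrow> real"
  assumes "prob_space Pr"
    and concave: "\<And>z h. h \<noteq> 0 \<Longrightarrow> f (z + h) + f (z - h) < 2 * f z"
    and max: "AE \<omega> in Pr. \<forall>x. f x \<le> f (X \<omega>)"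
  shows "\<exists>c. AE \<omega> in Pr. X \<omega> = c"
proof -
  obtain \<omega>\<^sub>0 where max\<^sub>0: "\<forall>x. f x \<le> f (X \<omega>\<^sub>0)"
    using eventually_happens'[OF prob_space.ae_filter_bot[OF assms(1)] max] by blast
  from max have "AE \<omega> in Pr. X \<omega> = X \<omega>\<^sub>0"
    by (rule eventually_mono) (rule maximizer_unique[OF concave _ max\<^sub>0])
  then show ?thesis ..
qed

theorem mainTheorem8:
  fixes Pr :: "'w measure"
    and Sig :: "real^'n^'n" and g :: "real^'n" and M :: "real^'n^'n"
    and S :: "'n set" and delta :: "'n \<Rightarrow> 'w \<Rightarrow> real^'n"
  assumes "prob_space Pr"
    and "transpose Sig = Sig"
    and "\<forall>x. x \<noteq> 0 \<longrightarrow> 0 < x \<bullet> (Sig *v x)"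
    and "\<forall>i. 0 < g$i"
    and "\<forall>k\<in>S. delta k \<in> borel_measurable Pr"
    and "\<forall>k\<in>S. integrable Pr (delta k)"
    and "\<forall>k\<in>S. integrable Pr (\<lambda>\<omega>. (norm (delta k \<omega>))\<^sup>2)"
    and "prob_space.indep_vars Pr (\<lambda>_. borel) delta S"
    and "\<forall>j. j \<notin> S \<longrightarrow> (\<forall>\<omega>\<in>space Pr. delta j \<omega> = 0)"
    and "\<forall>k\<in>S. AE \<omega> in Pr. \<forall>x. expected_utility Pr Sig g M delta k x
                                 \<le> expected_utility Pr Sig g M delta k (delta k \<omega>)"
  shows "\<forall>k\<in>S. \<exists>c. AE \<omega> in Pr. delta k \<omega> = c"
proof
  fix k
  assume "k \<in> S"
  interpret negotiation Sig g
    using assms(3,4) by unfold_locales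
  have meas: "delta c \<in> borel_measurable Pr" for c
  proof (cases "c \<in> S")
    case False
    then show ?thesis
      using assms(9) by (subst measurable_cong[where g = "\<lambda>_. 0"]) auto
  qed (use assms(5) in blast)
  have moments: "integrable Pr (\<lambda>\<omega>. (norm (delta c \<omega>))\<^sup>2)" for c
  proof (cases "c \<in> S")
    case False
    then show ?thesis
      using assms(9) by (subst Bochner_Integration.integrable_cong[where g = "\<lambda>_. 0"]) auto
  qed (use assms(7) in blast)
  show "\<exists>c. AE \<omega> in Pr. delta k \<omega> = c"
    using assms(10) \<open>k \<in> S\<close>
    by (intro AE_eq_const_of_AE_maximizer[where f = "expected_utility Pr Sig g M delta k", OF assms(1)]
        expected_utility_strictly_concave[OF assms(1) meas moments]) blast+
qed

end
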